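(* Let $(\breve N,\breve g,\breve P)$ be a Golden semi-Riemannian manifold. Then $\breve N$ admits no $1$-lightlike radical transversal lightlike submanifold. That is, there is no radical transversal lightlike submanifold $\acute N$ of $\breve N$ with $\operatorname{rank}(\mathrm{Rad}\,T\acute N)=1$.
   Context: A Golden semi-Riemannian manifold $(\breve N,\breve g,\breve P)$ is a semi-Riemannian manifold $(\breve N,\breve g)$ with a $(1,1)$-tensor field $\breve P$ such that $\breve P^2=\breve P+I$ and $\breve g(\breve PX,Y)=\breve g(X,\breve PY)$ for all vector fields $X,Y$. Equivalently, the second condition reads $\breve g(\breve PX,\breve PY)=\breve g(\breve PX,Y)+\breve g(X,Y)$. A lightlike submanifold $(\acute N,g,S(T\acute N),S(T\acute N^\perp))$ of $\breve N$ is an immersed submanifold whose induced metric $g$ is degenerate, with radical distribution $\mathrm{Rad}\,T\acute N=T\acute N\cap T\acute N^\perp$ of constant rank $r\ge1$. It comes with the following bundles: - a non-degenerate screen distribution $S(T\acute N)$, with $T\acute N=\mathrm{Rad}\,T\acute N\perp S(T\acute N)$; - a non-degenerate screen transversal bundle $S(T\acute N^\perp)$, which is a complement of $\mathrm{Rad}\,T\acute N$ in $T\acute N^\perp$; - a lightlike transversal bundle $ltr(T\acute N)$ of rank $r$. The bundle $ltr(T\acute N)$ is orthogonal to $S(T\acute N)$ and $S(T\acute N^\perp)$. For any local basis $\{\xi_i\}$ of $\mathrm{Rad}\,T\acute N$ it is locally spanned by $\{N_i\}$ with $\breve g(N_i,\xi_j)=\delta_{ij}$ and $\breve g(N_i,N_j)=0$.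 Thus $$T\breve N|_{\acute N}=S(T\acute N)\perp[\mathrm{Rad}\,T\acute N\oplus ltr(T\acute N)]\perp S(T\acute N^\perp).$$ Such a submanifold is called $r$-lightlike when $\operatorname{rank}\mathrm{Rad}\,T\acute N=r$. A lightlike submanifold is a radical transversal lightlike submanifold if $\breve P(\mathrm{Rad}\,T\acute N)=ltr(T\acute N)$ and $\breve P(S(T\acute N))=S(T\acute N)$. *)

theory Defs
  imports "HOL-Analysis.Analysis"
begin

(* Every tangent space of the ambient manifold is
   identified with a fixed finite-dimensional real vector space 'v; tensor fields
   are families indexed by points. Smoothness is not imposed. *)

definition gperp :: "('v \<Rightarrow> 'v \<Rightarrow> real) \<Rightarrow> 'v set \<Rightarrow> 'v set" where
  "gperp g W = {v. \<forall>w\<in>W. g v w = 0}"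

definition nondeg_on :: "('v::real_vector \<Rightarrow> 'v \<Rightarrow> real) \<Rightarrow> 'v set \<Rightarrow> bool" where
  "nondeg_on g W \<longleftrightarrow> (\<forall>v\<in>W. (\<forall>w\<in>W. g v w = 0) \<longrightarrow> v = 0)"

definition semi_riem_form :: "('v::real_vector \<Rightarrow> 'v \<Rightarrow> real) \<Rightarrow> bool" where
  "semi_riem_form g \<longleftrightarrow> (\<forall>x y. g x y = g y x) \<and> (\<forall>y. linear (\<lambda>x. g x y))
     \<and> nondeg_on g UNIV"

definition golden_at :: "('v::real_vector \<Rightarrow> 'v \<Rightarrow> real) \<Rightarrow> ('v \<Rightarrow> 'v) \<Rightarrow> bool" where
  "golden_at g P \<longleftrightarrow> semi_riem_form g \<and> linear P \<and> (\<forall>x. P (P x) = P x + x)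
     \<and> (\<forall>x y. g (P x) y = g x (P y))"

definition golden_semi_riemannian_manifold ::
  "'p set \<Rightarrow> ('p \<Rightarrow> 'v::real_vector \<Rightarrow> 'v \<Rightarrow> real) \<Rightarrow> ('p \<Rightarrow> 'v \<Rightarrow> 'v) \<Rightarrow> bool" where
  "golden_semi_riemannian_manifold M g P \<longleftrightarrow> (\<forall>p\<in>M. golden_at (g p) (P p))"

(* r-lightlike structure at one point: tangent space TN, radical Rad, screen Scr,
   screen transversal ScrTr, lightlike transversal Ltr *)
definition lightlike_at ::
  "('v::euclidean_space \<Rightarrow> 'v \<Rightarrow> real) \<Rightarrow> nat \<Rightarrow> 'v set \<Rightarrow> 'v set \<Rightarrow> 'v set \<Rightarrow> 'v set \<Rightarrow> 'v set \<Rightarrow> bool" where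
  "lightlike_at g r TN Rad Scr ScrTr Ltr \<longleftrightarrow>
     subspace TN \<and> Rad = TN \<inter> gperp g TN \<and> r \<ge> 1 \<and> dim Rad = r \<and>
     subspace Scr \<and> Scr \<subseteq> TN \<and> Rad \<inter> Scr = {0} \<and>
     TN = {a + b | a b. a \<in> Rad \<and> b \<in> Scr} \<and> Scr \<subseteq> gperp g Rad \<and> nondeg_on g Scr \<and>
     subspace ScrTr \<and> ScrTr \<subseteq> gperp g TN \<and> Rad \<inter> ScrTr = {0} \<and>
     gperp g TN = {a + b | a b. a \<in> Rad \<and> b \<in> ScrTr} \<and> nondeg_on g ScrTr \<and>
     subspace Ltr \<and> dim Ltr = r \<and> Ltr \<subseteq> gperp g Scr \<and> Ltr \<subseteq> gperp g ScrTr \<and>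
     (\<forall>\<xi>::nat \<Rightarrow> 'v. (inj_on \<xi> {..<r} \<and> independent (\<xi> ` {..<r}) \<and> span (\<xi> ` {..<r}) = Rad) \<longrightarrow>
        (\<exists>Nv::nat \<Rightarrow> 'v. span (Nv ` {..<r}) = Ltr \<and>
           (\<forall>i<r. \<forall>j<r. g (Nv i) (\<xi> j) = (if i = j then 1 else 0) \<and> g (Nv i) (Nv j) = 0))) \<and>
     UNIV = {a + b + c + d | a b c d. a \<in> Scr \<and> b \<in> Rad \<and> c \<in> Ltr \<and> d \<in> ScrTr}"

definition radical_transversal_at :: "('v \<Rightarrow> 'v) \<Rightarrow> 'v set \<Rightarrow> 'v set \<Rightarrow> 'v set \<Rightarrow> bool" where
  "radical_transversal_at P Rad Scr Ltr \<longleftrightarrow> P ` Rad = Ltr \<and> P ` Scr = Scr"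

definition radical_transversal_lightlike_submanifold ::
  "'p set \<Rightarrow> ('p \<Rightarrow> 'v::euclidean_space \<Rightarrow> 'v \<Rightarrow> real) \<Rightarrow> ('p \<Rightarrow> 'v \<Rightarrow> 'v) \<Rightarrow> nat \<Rightarrow>
   'q set \<Rightarrow> ('q \<Rightarrow> 'p) \<Rightarrow> ('q \<Rightarrow> 'v set) \<Rightarrow> ('q \<Rightarrow> 'v set) \<Rightarrow> ('q \<Rightarrow> 'v set) \<Rightarrow>
   ('q \<Rightarrow> 'v set) \<Rightarrow> ('q \<Rightarrow> 'v set) \<Rightarrow> bool" where
  "radical_transversal_lightlike_submanifold M g P r A f TN Rad Scr ScrTr Ltr \<longleftrightarrow>
     A \<noteq> {} \<and> f ` A \<subseteq> M \<and>
     (\<forall>q\<in>A. lightlike_at (g (f q)) r (TN q) (Rad q) (Scr q) (ScrTr q) (Ltr q) \<and>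
             radical_transversal_at (P (f q)) (Rad q) (Scr q) (Ltr q))"

end

theory Submission
  imports Defs
begin

text \<open>
  Let \<open>\<xi>\<close> span the one-dimensional radical and let \<open>N\<close> span \<open>ltr(TN)\<close>, with
  \<open>g(N,\<xi>) = 1\<close> and \<open>g(N,N) = 0\<close>. Radical transversality gives \<open>P\<xi> = cN\<close>, so \<open>P\<xi>\<close> is null.
  The golden identities \<open>P\<^sup>2 = P + I\<close> and symmetry of \<open>P\<close> yield
  \<open>g(P\<xi>,P\<xi>) = g(P\<xi>,\<xi>) + g(\<xi>,\<xi>)\<close>, and \<open>\<xi>\<close> is null as well, hence
  \<open>c = g(P\<xi>,\<xi>) = 0\<close>. But \<open>P\<close> is invertible (\<open>P(P - I) = I\<close>), so \<open>P\<xi> = 0\<close> forces \<open>\<xi> = 0\<close>.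
\<close>

lemma semi_riem_form_bilinear:
  assumes "semi_riem_form g"
  shows "bilinear g"
proof -
  have sym: "g x y = g y x" and lin: "linear (\<lambda>x. g x y)" for x y
    using assms unfolding semi_riem_form_def by auto
  have "linear (\<lambda>y. g x y)" for x
    using lin[of x] by (subst sym) simp
  with lin show ?thesis
    unfolding bilinear_def by blast
qed

lemma gperp_subspace:
  assumes "\<And>y. linear (\<lambda>x. g x y)"
  shows "subspace (gperp g W)"
  unfolding subspace_def gperp_def
  using linear_0[OF assms] linear_add[OF assms] linear_scale[OF assms] by auto

lemma golden_norm_image:
  assumes "golden_at g P"
  shows "g (P x) (P x) = g (P x) x + g x x"
proof -
  have "bilinear g"
    using assms unfolding golden_at_def by (blast intro: semi_riem_form_bilinear)
  moreover have "g (P x) (P x) = g x (P (P x))" and "P (P x) = P x + x"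
    and "g x (P x) = g (P x) x"
    using assms unfolding golden_at_def semi_riem_form_def by auto
  ultimately show ?thesis
    by (simp add: bilinear_radd)
qed

lemma golden_kernel_trivial:
  assumes "golden_at g P" and "P x = 0"
  shows "x = 0"
proof -
  have "linear P" and "P (P x) = P x + x"
    using assms(1) unfolding golden_at_def by auto
  with assms(2) show ?thesis
    by (simp add: linear_0)
qed

lemma lightlike_at_rank_one_frame:
  assumes "semi_riem_form g" and "lightlike_at g 1 TN Rad Scr ScrTr Ltr"
  obtains \<xi> N where "Rad = span {\<xi>}" "\<xi> \<noteq> 0" "g \<xi> \<xi> = 0"
    "Ltr = span {N}" "g N \<xi> = 1" "g N N = 0"
proof -
  have Rad_eq: "Rad = TN \<inter> gperp g TN"
    using assms(2) unfolding lightlike_at_def by (elim conjE) assumption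
  have "subspace TN"
    using assms(2) unfolding lightlike_at_def by (elim conjE) assumption
  have "dim Rad = 1"
    using assms(2) unfolding lightlike_at_def by (elim conjE) assumption
  have frames: "\<forall>\<xi>::nat \<Rightarrow> 'a. inj_on \<xi> {..<1} \<and> independent (\<xi> ` {..<1}) \<and>
        span (\<xi> ` {..<1}) = Rad \<longrightarrow>
      (\<exists>Nv::nat \<Rightarrow> 'a. span (Nv ` {..<1}) = Ltr \<and>
        (\<forall>i<1. \<forall>j<1. g (Nv i) (\<xi> j) = (if i = j then 1 else 0) \<and> g (Nv i) (Nv j) = 0))"
    using assms(2) unfolding lightlike_at_def by (elim conjE) assumption
  have "subspace (gperp g TN)"
    using assms(1) gperp_subspace unfolding semi_riem_form_def by blast
  with Rad_eq \<open>subspace TN\<close> have "subspace Rad"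
    by (simp add: subspace_inter)
  obtain B where B: "B \<subseteq> Rad" "independent B" "Rad \<subseteq> span B" "card B = 1"
    using basis_exists \<open>dim Rad = 1\<close> by metis
  then obtain \<xi> where "B = {\<xi>}"
    by (metis card_1_singletonE)
  with B \<open>subspace Rad\<close> have Rad\<xi>: "Rad = span {\<xi>}" and "\<xi> \<noteq> 0" "independent {\<xi>}" "\<xi> \<in> Rad"
    using span_minimal[of B Rad] by auto
  have "g \<xi> \<xi> = 0"
    using \<open>\<xi> \<in> Rad\<close> Rad_eq unfolding gperp_def by auto
  have "inj_on (\<lambda>_::nat. \<xi>) {..<1} \<and> independent ((\<lambda>_::nat. \<xi>) ` {..<1}) \<and>
      span ((\<lambda>_::nat. \<xi>) ` {..<1}) = Rad"
    using \<open>independent {\<xi>}\<close> Rad\<xi> by (simp add: lessThan_Suc)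
  with frames obtain Nv :: "nat \<Rightarrow> 'a" where
    "Ltr = span {Nv 0}" "g (Nv 0) \<xi> = 1" "g (Nv 0) (Nv 0) = 0"
    by (auto simp: lessThan_Suc)
  with Rad\<xi> \<open>\<xi> \<noteq> 0\<close> \<open>g \<xi> \<xi> = 0\<close> show ?thesis
    by (rule that)
qed

lemma no_rank_one_radical_transversal_at:
  assumes "golden_at g P" and "lightlike_at g 1 TN Rad Scr ScrTr Ltr"
    and "radical_transversal_at P Rad Scr Ltr"
  shows False
proof -
  have "semi_riem_form g"
    using assms(1) unfolding golden_at_def by blast
  then have bil: "bilinear g"
    by (rule semi_riem_form_bilinear)
  obtain \<xi> N where "Rad = span {\<xi>}" "\<xi> \<noteq> 0" "g \<xi> \<xi> = 0"
    and "Ltr = span {N}" "g N \<xi> = 1" "g N N = 0"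
    by (rule lightlike_at_rank_one_frame[OF \<open>semi_riem_form g\<close> assms(2)])
  moreover have "P \<xi> \<in> Ltr"
    using assms(3) \<open>Rad = span {\<xi>}\<close> span_base[of \<xi> "{\<xi>}"]
    unfolding radical_transversal_at_def by blast
  ultimately obtain c where c: "P \<xi> = c *\<^sub>R N"
    by (auto simp: span_singleton)
  have "c = g (P \<xi>) \<xi>"
    using c \<open>g N \<xi> = 1\<close> bil by (simp add: bilinear_lmul)
  also have "\<dots> = g (P \<xi>) (P \<xi>)"
    using golden_norm_image[OF assms(1)] \<open>g \<xi> \<xi> = 0\<close> by simp
  also have "\<dots> = 0"
    using c \<open>g N N = 0\<close> bil by (simp add: bilinear_lmul bilinear_rmul)
  finally have "P \<xi> = 0"
    using c by simp
  with golden_kernel_trivial[OF assms(1)] \<open>\<xi> \<noteq> 0\<close> show False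
    by blast
qed

theorem mainTheorem1:
  fixes M :: "'p set" and g :: "'p \<Rightarrow> 'v::euclidean_space \<Rightarrow> 'v \<Rightarrow> real"
    and P :: "'p \<Rightarrow> 'v \<Rightarrow> 'v"
  assumes "golden_semi_riemannian_manifold M g P"
  shows "\<not> (\<exists>(A :: 'q set) f TN Rad Scr ScrTr Ltr.
            radical_transversal_lightlike_submanifold M g P 1 A f TN Rad Scr ScrTr Ltr)"
proof
  assume "\<exists>(A :: 'q set) f TN Rad Scr ScrTr Ltr.
            radical_transversal_lightlike_submanifold M g P 1 A f TN Rad Scr ScrTr Ltr"
  then obtain A :: "'q set" and f TN Rad Scr ScrTr Ltr where
    sub: "radical_transversal_lightlike_submanifold M g P 1 A f TN Rad Scr ScrTr Ltr"
    by blast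
  then obtain q where "q \<in> A" "f q \<in> M"
    unfolding radical_transversal_lightlike_submanifold_def by blast
  have "golden_at (g (f q)) (P (f q))"
    using assms \<open>f q \<in> M\<close> unfolding golden_semi_riemannian_manifold_def by blast
  moreover have "lightlike_at (g (f q)) 1 (TN q) (Rad q) (Scr q) (ScrTr q) (Ltr q)"
    and "radical_transversal_at (P (f q)) (Rad q) (Scr q) (Ltr q)"
    using sub \<open>q \<in> A\<close> unfolding radical_transversal_lightlike_submanifold_def by blast+
  ultimately show False
    by (rule no_rank_one_radical_transversal_at)
qed

end
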